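(* Let $X$ be a Banach space with property $( * )$, with constant $C_0$. Then for every subset $Y\subset X$, every continuous $F:X\to\mathbb{R}$ such that $F|_Y$ is Lipschitz, and every $\varepsilon>0$, there is a $\mathcal{C}^1$-smooth function $G:X\to\mathbb{R}$ such that (i) $|F(x)-G(x)|\le\varepsilon$ for all $x\in X$; (ii) $\operatorname{Lip}(G|_Y)\le C_0\operatorname{Lip}(F|_Y)$ and $\|G'(y)\|_{X^*}\le C_0\operatorname{Lip}(F|_Y)$ for all $y\in Y$. (iii) Moreover, there is a constant $C_1\ge C_0$ depending only on $X$ such that if $F$ is Lipschitz on $X$, then $G$ can be chosen, in addition to (i) and (ii), Lipschitz on $X$ with $\operatorname{Lip}(G)\le C_1\operatorname{Lip}(F)$.
   Context: A Banach space $X$ has property $( * )$ if there is a constant $C_0$, depending only on $X$, such that for every Lipschitz function $f:X\to\mathbb{R}$ and every $\varepsilon>0$ there is a Lipschitz, $\mathcal{C}^1$-smooth function $K:X\to\mathbb{R}$ with $|f(x)-K(x)|<\varepsilon$ for all $x\in X$ and $\operatorname{Lip}(K)\le C_0\operatorname{Lip}(f)$. *)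

theory Defs
  imports "HOL-Analysis.Analysis"
begin

text \<open>Lipschitz constant of f on S: the least Lipschitz constant (0 if S has at most one point).\<close>
definition Lip :: "'a::metric_space set \<Rightarrow> ('a \<Rightarrow> real) \<Rightarrow> real" where
  "Lip S f = Inf {L. lipschitz_on L S f}"

definition C1_with_deriv :: "('a::real_normed_vector \<Rightarrow> real) \<Rightarrow> ('a \<Rightarrow> ('a \<Rightarrow>\<^sub>L real)) \<Rightarrow> bool" where
  "C1_with_deriv G D \<longleftrightarrow> (\<forall>x. (G has_derivative blinfun_apply (D x)) (at x)) \<and> continuous_on UNIV D"

definition C1_smooth :: "('a::real_normed_vector \<Rightarrow> real) \<Rightarrow> bool" where
  "C1_smooth G \<longleftrightarrow> (\<exists>D. C1_with_deriv G D)"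

definition lipschitz :: "('a::metric_space \<Rightarrow> real) \<Rightarrow> bool" where
  "lipschitz f \<longleftrightarrow> (\<exists>L. lipschitz_on L UNIV f)"

definition property_star :: "'a::banach itself \<Rightarrow> real \<Rightarrow> bool" where
  "property_star _ C0 \<longleftrightarrow>
     (\<forall>f::'a \<Rightarrow> real. lipschitz f \<longrightarrow> (\<forall>\<epsilon>>0. \<exists>K. lipschitz K \<and> C1_smooth K \<and>
        (\<forall>x. \<bar>f x - K x\<bar> < \<epsilon>) \<and> Lip UNIV K \<le> C0 * Lip UNIV f))"

end

theory Submission
  imports Defs
begin

(* Given F continuous and Lipschitz on Y, first approximate F uniformly within eps/16 by a C^1
   function S (the only place where continuity of F is used).  Independently, extend F|Y to H on
   X with the same Lipschitz constant (McShane) and use property_star to get a C^1 function K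
   with Lip K <= C0 Lip(F|Y) that is eps/16-close to H.  Then glue: G = K + theta(S - K), where
   theta is a C^1, 1-Lipschitz "dead zone" vanishing on [-a, a] and within 4a of the identity.
   On Y we have |S - K| <= a, so G and its derivative agree with those of K there, giving (ii);
   everywhere G is 4a-close to S, giving (i).  If F is Lipschitz on X we take S from
   property_star directly; then G is Lipschitz with Lip G <= 3 |C0| Lip F, giving (iii).

   The uniform C^1 approximation of continuous functions uses a locally finite smooth partition
   of unity: the 1-Lipschitz "regularity radius" r of F is smoothed and composed with bumps to
   give weights w_n living where r > 2^-n/8; there F is uniformly close to a Lipschitz
   inf-convolution, which property_star smooths, and we average these smoothings with weights w_n. *)

lemma Lip_le: "lipschitz_on L S f \<Longrightarrow> Lip S f \<le> L"
  unfolding Lip_def by (rule cInf_lower) (auto intro: bdd_belowI[where m=0] lipschitz_on_nonneg)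

lemma Lip_nonneg: "lipschitz_on L S f \<Longrightarrow> 0 \<le> Lip S f"
  unfolding Lip_def by (rule cInf_greatest) (auto intro: lipschitz_on_nonneg)

lemma Lip_attained:
  assumes "lipschitz_on L S f" shows "lipschitz_on (Lip S f) S f"
proof (rule lipschitz_onI)
  show "0 \<le> Lip S f" using Lip_nonneg[OF assms] .
  fix x y assume xy: "x \<in> S" "y \<in> S"
  show "dist (f x) (f y) \<le> Lip S f * dist x y"
  proof (cases "x = y")
    case True then show ?thesis by simp
  next
    case False
    then have d: "dist x y > 0" by simp
    have "dist (f x) (f y) / dist x y \<le> Lip S f"
      unfolding Lip_def
    proof (rule cInf_greatest)
      show "{L. lipschitz_on L S f} \<noteq> {}" using assms by auto
      fix M assume "M \<in> {L. lipschitz_on L S f}"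
      then have "dist (f x) (f y) \<le> M * dist x y" using xy lipschitz_onD by blast
      then show "dist (f x) (f y) / dist x y \<le> M" using d by (simp add: divide_le_eq)
    qed
    then show ?thesis using d by (simp add: divide_le_eq)
  qed
qed

lemma Lip_mono: "lipschitz_on L S f \<Longrightarrow> T \<subseteq> S \<Longrightarrow> Lip T f \<le> Lip S f"
  by (meson Lip_attained Lip_le lipschitz_on_subset)

lemma Lip_cong: "(\<And>x. x \<in> S \<Longrightarrow> f x = g x) \<Longrightarrow> Lip S f = Lip S g"
  unfolding Lip_def by (metis lipschitz_on_cong)

lemma norm_derivative_le_lipschitz:
  fixes f :: "'a::real_normed_vector \<Rightarrow> real"
  assumes L: "lipschitz_on L UNIV f" and d: "(f has_derivative blinfun_apply D) (at x)"
  shows "norm D \<le> L"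
proof (rule norm_blinfun_bound)
  show "0 \<le> L" using lipschitz_on_nonneg[OF L] .
  fix h
  show "norm (blinfun_apply D h) \<le> L * norm h"
  proof (cases "h = 0")
    case True then show ?thesis by simp
  next
    case False
    then have hp: "norm h > 0" by simp
    show ?thesis
    proof (rule field_le_epsilon)
      fix e :: real assume e: "e > 0"
      define e' where "e' = e / norm h"
      have e': "e' > 0" using e hp by (simp add: e'_def)
      obtain dd where dd: "dd > 0" and
        H: "\<And>y. norm (y - x) < dd \<Longrightarrow> norm (f y - f x - blinfun_apply D (y - x)) \<le> e' * norm (y - x)"
        using d e' unfolding has_derivative_at_alt by blast
      define t where "t = dd / (2 * norm h)"
      have t: "t > 0" using dd hp by (simp add: t_def)
      have "norm ((x + t *\<^sub>R h) - x) < dd" using t hp dd by (simp add: t_def)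
      then have lin: "norm (f (x + t *\<^sub>R h) - f x - t * blinfun_apply D h) \<le> e' * (t * norm h)"
        using H[of "x + t *\<^sub>R h"] t by (simp add: blinfun.scaleR_right)
      have lip: "\<bar>f (x + t *\<^sub>R h) - f x\<bar> \<le> L * (t * norm h)"
        using lipschitz_on_normD[OF L, of "x + t *\<^sub>R h" x] t by simp
      have "t * \<bar>blinfun_apply D h\<bar> \<le> t * (L * norm h + e' * norm h)"
        using lin lip by (simp add: abs_mult algebra_simps)
      then have "\<bar>blinfun_apply D h\<bar> \<le> L * norm h + e' * norm h" using t by simp
      then show "norm (blinfun_apply D h) \<le> L * norm h + e" using hp by (simp add: e'_def)
    qed
  qed
qed

definition C1_on :: "'a::real_normed_vector set \<Rightarrow> ('a \<Rightarrow> real) \<Rightarrow> ('a \<Rightarrow> ('a \<Rightarrow>\<^sub>L real)) \<Rightarrow> bool" where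
  "C1_on U f D \<longleftrightarrow> (\<forall>x\<in>U. (f has_derivative blinfun_apply (D x)) (at x)) \<and> continuous_on U D"

lemma C1_with_deriv_iff: "C1_with_deriv f D \<longleftrightarrow> C1_on UNIV f D"
  by (simp add: C1_with_deriv_def C1_on_def)

lemma C1_on_cont: "C1_on U f D \<Longrightarrow> continuous_on U f"
  unfolding C1_on_def
  by (meson continuous_at_imp_continuous_on has_derivative_continuous)

lemma C1_on_subset: "C1_on U f D \<Longrightarrow> V \<subseteq> U \<Longrightarrow> C1_on V f D"
  unfolding C1_on_def by (meson continuous_on_subset subsetD)

lemma C1_on_const: "C1_on U (\<lambda>x. c) (\<lambda>x. 0)"
  unfolding C1_on_def by (auto simp: zero_blinfun.rep_eq)

lemma C1_on_add: "C1_on U f Df \<Longrightarrow> C1_on U g Dg \<Longrightarrow> C1_on U (\<lambda>x. f x + g x) (\<lambda>x. Df x + Dg x)"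
  unfolding C1_on_def by (auto simp: plus_blinfun.rep_eq intro!: has_derivative_add continuous_on_add)

lemma C1_on_diff: "C1_on U f Df \<Longrightarrow> C1_on U g Dg \<Longrightarrow> C1_on U (\<lambda>x. f x - g x) (\<lambda>x. Df x - Dg x)"
  unfolding C1_on_def by (auto simp: minus_blinfun.rep_eq intro!: has_derivative_diff continuous_on_diff)

lemma C1_on_cmult: "C1_on U f Df \<Longrightarrow> C1_on U (\<lambda>x. c * f x) (\<lambda>x. c *\<^sub>R Df x)"
  unfolding C1_on_def
  by (auto simp: scaleR_blinfun.rep_eq intro!: has_derivative_mult_right continuous_on_scaleR continuous_on_const)

lemma C1_on_mult:
  assumes f: "C1_on U f Df" and g: "C1_on U g Dg"
  shows "C1_on U (\<lambda>x. f x * g x) (\<lambda>x. f x *\<^sub>R Dg x + g x *\<^sub>R Df x)"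
proof -
  have cf: "continuous_on U f" and cg: "continuous_on U g" using C1_on_cont[OF f] C1_on_cont[OF g] by auto
  have "((\<lambda>x. f x * g x) has_derivative blinfun_apply (f x *\<^sub>R Dg x + g x *\<^sub>R Df x)) (at x)"
    if "x \<in> U" for x
    by (rule has_derivative_eq_rhs, rule has_derivative_mult)
       (use f g that in \<open>auto simp: C1_on_def fun_eq_iff plus_blinfun.rep_eq scaleR_blinfun.rep_eq\<close>)
  then show ?thesis
    using f g unfolding C1_on_def by (auto intro!: continuous_on_add continuous_on_scaleR cf cg)
qed

lemma C1_on_sum:
  assumes "finite I" "\<And>i. i \<in> I \<Longrightarrow> C1_on U (f i) (Df i)"
  shows "C1_on U (\<lambda>x. \<Sum>i\<in>I. f i x) (\<lambda>x. \<Sum>i\<in>I. Df i x)"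
  using assms
proof (induction I rule: finite_induct)
  case empty then show ?case using C1_on_const[of U 0] by simp
next
  case (insert i I)
  then show ?case using C1_on_add[of U "f i" "Df i"] by simp
qed

lemma C1_on_compose:
  fixes \<phi> \<phi>' :: "real \<Rightarrow> real"
  assumes f: "C1_on U f Df" and d: "\<And>t. (\<phi> has_real_derivative \<phi>' t) (at t)"
    and c: "continuous_on UNIV \<phi>'"
  shows "C1_on U (\<lambda>x. \<phi> (f x)) (\<lambda>x. \<phi>' (f x) *\<^sub>R Df x)"
proof -
  have cf: "continuous_on U f" using f by (rule C1_on_cont)
  have "continuous_on U (\<lambda>x. \<phi>' (f x))"
    using continuous_on_compose2[OF c cf] by simp
  moreover have "((\<lambda>x. \<phi> (f x)) has_derivative blinfun_apply (\<phi>' (f x) *\<^sub>R Df x)) (at x)" if "x \<in> U" for x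
  proof -
    have "(f has_derivative blinfun_apply (Df x)) (at x)" using f that unfolding C1_on_def by blast
    from has_derivative_compose[OF this d[of "f x", unfolded has_field_derivative_def]]
    show ?thesis by (simp add: scaleR_blinfun.rep_eq mult.commute)
  qed
  ultimately show ?thesis using f unfolding C1_on_def
    by (auto intro!: continuous_on_scaleR)
qed

lemma C1_on_divide:
  assumes f: "C1_on U f Df" and g: "C1_on U g Dg" and nz: "\<And>x. x \<in> U \<Longrightarrow> g x \<noteq> 0"
  shows "C1_on U (\<lambda>x. f x / g x) (\<lambda>x. (1 / g x) *\<^sub>R Df x - (f x / (g x * g x)) *\<^sub>R Dg x)"
proof -
  have cf: "continuous_on U f" and cg: "continuous_on U g" using C1_on_cont[OF f] C1_on_cont[OF g] by auto
  have "((\<lambda>x. f x / g x) has_derivative blinfun_apply ((1 / g x) *\<^sub>R Df x - (f x / (g x * g x)) *\<^sub>R Dg x)) (at x)"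
    if "x \<in> U" for x
    by (rule has_derivative_eq_rhs, rule has_derivative_divide')
       (use f g nz that in \<open>auto simp: C1_on_def fun_eq_iff minus_blinfun.rep_eq scaleR_blinfun.rep_eq field_simps\<close>)
  moreover have "continuous_on U (\<lambda>x. (1 / g x) *\<^sub>R Df x - (f x / (g x * g x)) *\<^sub>R Dg x)"
    using f g nz unfolding C1_on_def
    by (auto intro!: continuous_intros cf cg)
  ultimately show ?thesis unfolding C1_on_def by blast
qed

text \<open>\<open>C\<^sup>1\<close>-smoothness is a local property: a function that agrees near every point with some
  \<open>C\<^sup>1\<close> function is \<open>C\<^sup>1\<close> (the local derivatives agree on overlaps by uniqueness).\<close>

lemma C1_from_local:
  fixes f :: "'a::real_normed_vector \<Rightarrow> real"
  assumes "\<And>x. \<exists>U g Dg. open U \<and> x \<in> U \<and> (\<forall>z\<in>U. f z = g z) \<and> C1_on U g Dg"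
  shows "C1_smooth f"
proof -
  from assms obtain U g Dg where h: "\<And>x. open (U x) \<and> x \<in> U x \<and> (\<forall>z\<in>U x. f z = g x z) \<and> C1_on (U x) (g x) (Dg x)"
    by metis
  have der: "(f has_derivative blinfun_apply (Dg x z)) (at z)" if "z \<in> U x" for x z
  proof -
    have "(g x has_derivative blinfun_apply (Dg x z)) (at z)" using h[of x] that unfolding C1_on_def by blast
    then show ?thesis
      by (rule has_derivative_transform_within_open[where s="U x"]) (use h[of x] that in auto)
  qed
  define D where "D x = Dg x x" for x
  have eq: "D z = Dg x z" if "z \<in> U x" for x z
  proof -
    have "blinfun_apply (Dg z z) = blinfun_apply (Dg x z)"
      by (rule has_derivative_unique[OF der der]) (use h[of z] that in auto)
    then show ?thesis unfolding D_def by (simp add: blinfun_apply_inject)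
  qed
  have "continuous_on UNIV D"
  proof (rule continuous_at_imp_continuous_on, intro ballI)
    fix x :: 'a
    have "continuous_on (U x) D"
      using h[of x] eq[of _ x] unfolding C1_on_def by (auto intro: continuous_on_cong[THEN iffD1])
    then show "isCont D x" using h[of x] continuous_on_eq_continuous_at by blast
  qed
  moreover have "(f has_derivative blinfun_apply (D x)) (at x)" for x
    unfolding D_def using der h by blast
  ultimately show ?thesis unfolding C1_smooth_def C1_with_deriv_def by blast
qed

definition pos_sq :: "real \<Rightarrow> real" where "pos_sq u = (max 0 u)^2"

lemma pos_sq_deriv: "(pos_sq has_real_derivative 2 * max 0 u) (at u)"
proof (cases u "0::real" rule: linorder_cases)
  case less
  have "((\<lambda>x. 0::real) has_real_derivative 0) (at u)" by simp
  then have "(pos_sq has_real_derivative 0) (at u)"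
    by (rule has_field_derivative_transform_within_open[where S="{..<0}"])
       (use less in \<open>auto simp: pos_sq_def\<close>)
  then show ?thesis using less by simp
next
  case greater
  have "((\<lambda>x. x^2::real) has_real_derivative 2 * u) (at u)"
    by (auto intro!: derivative_eq_intros)
  then have "(pos_sq has_real_derivative 2 * u) (at u)"
    by (rule has_field_derivative_transform_within_open[where S="{0<..}"])
       (use greater in \<open>auto simp: pos_sq_def\<close>)
  then show ?thesis using greater by simp
next
  case equal
  have "((\<lambda>y. (pos_sq y - pos_sq 0) / (y - 0)) \<longlongrightarrow> 0) (at 0)"
  proof (rule Lim_transform_eventually)
    have "((\<lambda>y. max 0 y) \<longlongrightarrow> max 0 (0::real)) (at (0::real))" by (intro tendsto_intros)
    then show "((\<lambda>y. max 0 y) \<longlongrightarrow> 0) (at (0::real))" by simp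
    have "max 0 y = (pos_sq y - pos_sq 0) / (y - 0)" if "y \<noteq> 0" for y :: real
    proof (cases "y > 0")
      case True then show ?thesis by (simp add: pos_sq_def power2_eq_square)
    next
      case False then show ?thesis using that by (simp add: pos_sq_def max_def)
    qed
    then show "\<forall>\<^sub>F y in at 0. max 0 y = (pos_sq y - pos_sq 0) / (y - 0)"
      unfolding eventually_at_filter by (simp add: always_eventually)
  qed
  then show ?thesis using equal by (simp add: has_field_derivative_iff)
qed

lemma pos_sq_chain:
  "(f has_real_derivative f') (at x) \<Longrightarrow> E = 2 * max 0 (f x) * f' \<Longrightarrow>
     ((\<lambda>x. pos_sq (f x)) has_real_derivative E) (at x)"
  using DERIV_chain2[OF pos_sq_deriv, of f f' x] by simp

text \<open>The dead zone \<open>dead_zone a\<close>: a \<open>C\<^sup>1\<close>, 1-Lipschitz odd function vanishing on \<open>[-a, a]\<close>,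
  equal to \<open>t \<mp> 3a/2\<close> for \<open>|t| \<ge> 2a\<close>, hence within \<open>4a\<close> of the identity.\<close>

definition dead_zone :: "real \<Rightarrow> real \<Rightarrow> real" where
  "dead_zone a t = (1 / (2*a)) * (pos_sq (t - a) - pos_sq (t - 2*a) - pos_sq (-t - a) + pos_sq (-t - 2*a))"

definition dead_zone' :: "real \<Rightarrow> real \<Rightarrow> real" where
  "dead_zone' a t = (1 / a) * (max 0 (t - a) - max 0 (t - 2*a) + max 0 (-t - a) - max 0 (-t - 2*a))"

lemma dead_zone_deriv: "a > 0 \<Longrightarrow> (dead_zone a has_real_derivative dead_zone' a t) (at t)"
  unfolding dead_zone_def[abs_def] dead_zone'_def
  by (rule derivative_eq_intros pos_sq_chain refl)+ (simp add: algebra_simps)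

lemma dead_zone'_cont: "continuous_on UNIV (dead_zone' a)"
  unfolding dead_zone'_def by (intro continuous_intros)

lemma dead_zone_vanishes: "a > 0 \<Longrightarrow> \<bar>t\<bar> \<le> a \<Longrightarrow> dead_zone a t = 0"
  unfolding dead_zone_def pos_sq_def by (auto simp: max_def)

lemma dead_zone'_vanishes: "a > 0 \<Longrightarrow> \<bar>t\<bar> \<le> a \<Longrightarrow> dead_zone' a t = 0"
  unfolding dead_zone'_def by (auto simp: max_def)

lemma dead_zone'_bound: assumes a: "a > 0" shows "\<bar>dead_zone' a t\<bar> \<le> 1"
proof -
  define P where "P = max 0 (t - a) - max 0 (t - 2*a) + max 0 (-t - a) - max 0 (-t - 2*a)"
  have "0 \<le> P \<and> P \<le> a"
    unfolding P_def using a
    by (cases "t \<le> -2*a"; cases "t \<le> -a"; cases "t \<le> a"; cases "t \<le> 2*a"; simp add: max_def; linarith)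
  then have "\<bar>P / a\<bar> \<le> 1" using a by (simp add: divide_le_eq)
  then show ?thesis unfolding dead_zone'_def P_def[symmetric] by simp
qed

lemma dead_zone_lipschitz: assumes a: "a > 0" shows "lipschitz_on 1 UNIV (dead_zone a)"
proof (rule bounded_derivative_imp_lipschitz)
  show "(dead_zone a has_derivative (\<lambda>h. dead_zone' a x * h)) (at x within UNIV)" for x
    using dead_zone_deriv[OF a] unfolding has_field_derivative_def by simp
  show "onorm (\<lambda>h. dead_zone' a x * h) \<le> 1" for x
  proof (rule onorm_bound)
    fix h :: real
    have "\<bar>dead_zone' a x\<bar> * \<bar>h\<bar> \<le> 1 * \<bar>h\<bar>"
      by (rule mult_right_mono) (use dead_zone'_bound[OF a] in auto)
    then show "norm (dead_zone' a x * h) \<le> 1 * norm h" by (simp add: abs_mult)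
  qed simp
qed auto

lemma dead_zone_close: assumes a: "a > 0" shows "\<bar>dead_zone a t - t\<bar> \<le> 4 * a"
proof (cases "\<bar>t\<bar> \<le> 2*a")
  case True
  have "\<bar>dead_zone a t - dead_zone a 0\<bar> \<le> 1 * \<bar>t - 0\<bar>"
    using lipschitz_onD[OF dead_zone_lipschitz[OF a], of t 0] by (simp add: dist_real_def)
  then show ?thesis using dead_zone_vanishes[OF a, of 0] a True by auto
next
  case False
  have big: "(t - a)^2 - (t - 2*a)^2 = 2*a*t - 3*a*a" "(-t - 2*a)^2 - (-t - a)^2 = 2*a*t + 3*a*a"
    by (simp_all add: power2_eq_square algebra_simps)
  from False consider "t \<ge> 2*a" | "t \<le> -2*a" by linarith
  then show ?thesis
  proof cases
    case 1
    then have "dead_zone a t = (1/(2*a)) * ((t - a)^2 - (t - 2*a)^2)"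
      unfolding dead_zone_def pos_sq_def using a by (simp add: max_def)
    also have "\<dots> = t - 3/2*a" using a unfolding big by (simp add: field_simps)
    finally show ?thesis using a by simp
  next
    case 2
    then have "dead_zone a t = (1/(2*a)) * ((-t - 2*a)^2 - (-t - a)^2)"
      unfolding dead_zone_def pos_sq_def using a by (simp add: max_def)
    also have "\<dots> = t + 3/2*a" using a unfolding big by (simp add: field_simps)
    finally show ?thesis using a by simp
  qed
qed

definition bump :: "real \<Rightarrow> real" where "bump t = pos_sq ((t - 1/4) * (2 - t))"
definition bump' :: "real \<Rightarrow> real" where "bump' t = 2 * max 0 ((t - 1/4) * (2 - t)) * (9/4 - 2*t)"

lemma bump_deriv: "(bump has_real_derivative bump' t) (at t)"
  unfolding bump_def[abs_def] bump'_def
  by (rule derivative_eq_intros pos_sq_chain refl)+ (simp add: algebra_simps)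

lemma bump'_cont: "continuous_on UNIV bump'"
  unfolding bump'_def by (intro continuous_intros)

lemma bump_nonneg: "bump t \<ge> 0" unfolding bump_def pos_sq_def by simp

lemma bump_vanishes: assumes "t \<le> 1/4 \<or> t \<ge> 2" shows "bump t = 0"
proof -
  have "(t - 1/4) * (2 - t) \<le> 0"
    using assms by (auto intro: mult_nonpos_nonneg mult_nonneg_nonpos)
  then show ?thesis unfolding bump_def pos_sq_def by (simp add: max_def)
qed

lemma bump_pos: "1/4 < t \<Longrightarrow> t < 2 \<Longrightarrow> bump t > 0"
  unfolding bump_def pos_sq_def by (auto simp: max_def)

lemma inf_convolution:
  fixes g :: "'a::metric_space \<Rightarrow> real"
  assumes Y: "Y \<noteq> {}" and L: "L \<ge> 0" and bdd: "\<And>x. \<exists>c. \<forall>y\<in>Y. c \<le> g y + L * dist x y"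
  shows "lipschitz_on L UNIV (\<lambda>x. INF y\<in>Y. g y + L * dist x y)"
    and "\<And>x y. y \<in> Y \<Longrightarrow> (INF y\<in>Y. g y + L * dist x y) \<le> g y + L * dist x y"
    and "\<And>x c. (\<And>y. y \<in> Y \<Longrightarrow> c \<le> g y + L * dist x y) \<Longrightarrow> c \<le> (INF y\<in>Y. g y + L * dist x y)"
proof -
  define H where "H x = (INF y\<in>Y. g y + L * dist x y)" for x
  have bb: "bdd_below ((\<lambda>y. g y + L * dist x y) ` Y)" for x
    using bdd[of x] by (auto intro: bdd_belowI2)
  show low: "(INF y\<in>Y. g y + L * dist x y) \<le> g y + L * dist x y" if "y \<in> Y" for x y
    by (rule cINF_lower[OF bb that])
  show gr: "c \<le> (INF y\<in>Y. g y + L * dist x y)" if "\<And>y. y \<in> Y \<Longrightarrow> c \<le> g y + L * dist x y" for x c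
    by (rule cINF_greatest[OF Y that])
  have one: "H x - L * dist x x' \<le> H x'" for x x'
    unfolding H_def
  proof (rule gr)
    fix y assume y: "y \<in> Y"
    have "(INF y\<in>Y. g y + L * dist x y) \<le> g y + L * dist x y" by (rule low[OF y])
    also have "\<dots> \<le> g y + L * dist x' y + L * dist x x'"
      using mult_left_mono[OF dist_triangle[of x y x'] L] by (simp add: algebra_simps dist_commute)
    finally show "(INF y\<in>Y. g y + L * dist x y) - L * dist x x' \<le> g y + L * dist x' y" by simp
  qed
  show "lipschitz_on L UNIV (\<lambda>x. INF y\<in>Y. g y + L * dist x y)"
  proof (rule lipschitz_onI[OF _ L])
    fix x x' :: 'a
    show "dist (INF y\<in>Y. g y + L * dist x y) (INF y\<in>Y. g y + L * dist x' y) \<le> L * dist x x'"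
      using one[of x x'] one[of x' x] unfolding H_def dist_real_def by (simp add: dist_commute abs_le_iff)
  qed
qed

lemma mcshane_extension:
  fixes F :: "'a::metric_space \<Rightarrow> real"
  assumes "lipschitz_on L Y F"
  shows "\<exists>H. lipschitz_on (Lip Y F) UNIV H \<and> (\<forall>y\<in>Y. H y = F y)"
proof (cases "Y = {}")
  case True
  then show ?thesis
    using lipschitz_on_mono[OF lipschitz_on_constant[of UNIV 0] order_refl Lip_nonneg[OF assms]] by auto
next
  case False
  define L' where "L' = Lip Y F"
  have FL: "lipschitz_on L' Y F" unfolding L'_def by (rule Lip_attained[OF assms])
  have L': "L' \<ge> 0" using lipschitz_on_nonneg[OF FL] .
  obtain y0 where y0: "y0 \<in> Y" using False by blast
  have bdd: "\<exists>c. \<forall>y\<in>Y. c \<le> F y + L' * dist x y" for x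
  proof (intro exI ballI)
    fix y assume y: "y \<in> Y"
    have "F y0 - F y \<le> L' * dist y y0" using lipschitz_onD[OF FL y y0] by (simp add: dist_real_def dist_commute)
    moreover have "L' * dist y y0 \<le> L' * dist x y + L' * dist x y0"
      using mult_left_mono[OF dist_triangle[of y y0 x] L'] by (simp add: algebra_simps dist_commute)
    ultimately show "F y0 - L' * dist x y0 \<le> F y + L' * dist x y" by linarith
  qed
  note I = inf_convolution[OF False L' bdd]
  show ?thesis
  proof (intro exI conjI ballI)
    show "lipschitz_on (Lip Y F) UNIV (\<lambda>x. INF y\<in>Y. F y + L' * dist x y)" using I(1) unfolding L'_def .
    fix y assume y: "y \<in> Y"
    have "(INF y'\<in>Y. F y' + L' * dist y y') \<le> F y + L' * dist y y" by (rule I(2)[OF y])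
    moreover have "F y \<le> (INF y'\<in>Y. F y' + L' * dist y y')"
    proof (rule I(3))
      fix y' assume "y' \<in> Y"
      then show "F y \<le> F y' + L' * dist y y'" using lipschitz_onD[OF FL y, of y'] by (simp add: dist_real_def abs_le_iff)
    qed
    ultimately show "(INF y'\<in>Y. F y' + L' * dist y y') = F y" by simp
  qed
qed

definition regular_ball :: "('a::metric_space \<Rightarrow> real) \<Rightarrow> real \<Rightarrow> 'a \<Rightarrow> real \<Rightarrow> bool" where
  "regular_ball R \<eta> x \<rho> \<longleftrightarrow> (\<forall>z\<in>ball x \<rho>. \<rho> * \<bar>R z\<bar> \<le> 1 \<and> (\<forall>w\<in>ball x \<rho>. \<bar>R z - R w\<bar> \<le> \<eta>))"

definition reg_radius :: "('a::metric_space \<Rightarrow> real) \<Rightarrow> real \<Rightarrow> 'a \<Rightarrow> real" where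
  "reg_radius R \<eta> x = Sup {\<rho>. 0 \<le> \<rho> \<and> \<rho> \<le> 1 \<and> regular_ball R \<eta> x \<rho>}"

lemma reg_radius_set:
  "0 \<in> {\<rho>. 0 \<le> \<rho> \<and> \<rho> \<le> 1 \<and> regular_ball R \<eta> x \<rho>}"
  "bdd_above {\<rho>. 0 \<le> \<rho> \<and> \<rho> \<le> 1 \<and> regular_ball R \<eta> x \<rho>}"
proof -
  show "0 \<in> {\<rho>. 0 \<le> \<rho> \<and> \<rho> \<le> 1 \<and> regular_ball R \<eta> x \<rho>}" by (simp add: regular_ball_def)
  show "bdd_above {\<rho>. 0 \<le> \<rho> \<and> \<rho> \<le> 1 \<and> regular_ball R \<eta> x \<rho>}" by (rule bdd_aboveI[where M=1]) auto
qed

lemma reg_radius_nonneg: "0 \<le> reg_radius R \<eta> x"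
  unfolding reg_radius_def by (rule cSup_upper[OF reg_radius_set])

lemma reg_radius_le1: "reg_radius R \<eta> x \<le> 1"
  unfolding reg_radius_def by (rule cSup_least) (use reg_radius_set(1)[of R \<eta> x] in blast, simp)

lemma regular_ball_mono:
  assumes "regular_ball R \<eta> x \<rho>" and "0 \<le> \<rho>'" and "\<rho>' \<le> \<rho>"
  shows "regular_ball R \<eta> x \<rho>'"
  unfolding regular_ball_def
proof (intro ballI conjI)
  fix z w assume z: "z \<in> ball x \<rho>'" and w: "w \<in> ball x \<rho>'"
  have zz: "z \<in> ball x \<rho>" and ww: "w \<in> ball x \<rho>" using z w assms(3) by auto
  have "\<rho>' * \<bar>R z\<bar> \<le> \<rho> * \<bar>R z\<bar>" using assms(3) by (simp add: mult_right_mono)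
  then show "\<rho>' * \<bar>R z\<bar> \<le> 1" using assms(1) zz unfolding regular_ball_def by force
  show "\<bar>R z - R w\<bar> \<le> \<eta>" using assms(1) zz ww unfolding regular_ball_def by blast
qed

lemma regular_ball_shift:
  assumes "regular_ball R \<eta> y \<rho>" and "dist x y \<le> \<rho>"
  shows "regular_ball R \<eta> x (\<rho> - dist x y)"
proof -
  have sub: "ball x (\<rho> - dist x y) \<subseteq> ball y \<rho>"
    by (auto simp: dist_commute)
       (metis dist_triangle add_less_cancel_left diff_add_cancel order_le_less_trans add.commute)
  show ?thesis
    unfolding regular_ball_def
  proof (intro ballI conjI)
    fix z w assume z: "z \<in> ball x (\<rho> - dist x y)" and w: "w \<in> ball x (\<rho> - dist x y)"
    have zz: "z \<in> ball y \<rho>" and ww: "w \<in> ball y \<rho>" using z w sub by auto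
    have "(\<rho> - dist x y) * \<bar>R z\<bar> \<le> \<rho> * \<bar>R z\<bar>" by (simp add: mult_right_mono)
    then show "(\<rho> - dist x y) * \<bar>R z\<bar> \<le> 1" using assms(1) zz unfolding regular_ball_def by force
    show "\<bar>R z - R w\<bar> \<le> \<eta>" using assms(1) zz ww unfolding regular_ball_def by blast
  qed
qed

lemma reg_radius_regular: assumes "0 \<le> \<rho>" "\<rho> < reg_radius R \<eta> x" shows "regular_ball R \<eta> x \<rho>"
proof -
  obtain \<rho>' where "\<rho>' \<in> {\<rho>. 0 \<le> \<rho> \<and> \<rho> \<le> 1 \<and> regular_ball R \<eta> x \<rho>}" "\<rho> < \<rho>'"
    using assms(2) less_cSup_iff[OF _ reg_radius_set(2)] reg_radius_set(1) unfolding reg_radius_def by blast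
  then show ?thesis using regular_ball_mono[of R \<eta> x \<rho>' \<rho>] assms(1) by simp
qed

lemma reg_radius_pos:
  assumes c: "continuous_on UNIV R" and \<eta>: "\<eta> > 0"
  shows "0 < reg_radius R \<eta> x"
proof -
  have "isCont R x" using c by (simp add: continuous_on_eq_continuous_at)
  then obtain d where d: "d > 0" and dd: "\<And>x'. dist x' x < d \<Longrightarrow> dist (R x') (R x) < min (\<eta>/2) 1"
    unfolding continuous_at_eps_delta using \<eta>
    by (metis min_less_iff_conj zero_less_divide_iff zero_less_numeral zero_less_one)
  define \<rho> where "\<rho> = min (min d 1) (1 / (\<bar>R x\<bar> + 1))"
  have \<rho>: "0 < \<rho>" "\<rho> \<le> 1" "\<rho> \<le> d" "\<rho> \<le> 1 / (\<bar>R x\<bar> + 1)" using d by (auto simp: \<rho>_def)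
  have near: "\<bar>R z - R x\<bar> < min (\<eta>/2) 1" if "z \<in> ball x \<rho>" for z
    using dd[of z] that \<rho>(3) by (simp add: dist_real_def dist_commute)
  have "regular_ball R \<eta> x \<rho>"
    unfolding regular_ball_def
  proof (intro ballI conjI)
    fix z assume z: "z \<in> ball x \<rho>"
    then have "\<bar>R z\<bar> \<le> \<bar>R x\<bar> + 1" using near[OF z] by linarith
    then have "\<rho> * \<bar>R z\<bar> \<le> (1 / (\<bar>R x\<bar> + 1)) * (\<bar>R x\<bar> + 1)"
      using \<rho> by (intro mult_mono) auto
    moreover have "\<bar>R x\<bar> + 1 > 0" using abs_ge_zero[of "R x"] by linarith
    ultimately show "\<rho> * \<bar>R z\<bar> \<le> 1" by simp
    fix w assume w: "w \<in> ball x \<rho>"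
    show "\<bar>R z - R w\<bar> \<le> \<eta>" using near[OF z] near[OF w] by linarith
  qed
  then have "\<rho> \<le> reg_radius R \<eta> x"
    unfolding reg_radius_def using \<rho> by (intro cSup_upper[OF _ reg_radius_set(2)]) auto
  then show ?thesis using \<rho> by simp
qed

lemma reg_radius_lipschitz: "lipschitz_on 1 UNIV (reg_radius R \<eta>)"
proof -
  have half: "reg_radius R \<eta> y - dist x y \<le> reg_radius R \<eta> x" for x y
  proof (rule dense_le)
    fix w assume w: "w < reg_radius R \<eta> y - dist x y"
    show "w \<le> reg_radius R \<eta> x"
    proof (cases "w \<le> 0")
      case True then show ?thesis using reg_radius_nonneg[of R \<eta> x] by simp
    next
      case False
      have "regular_ball R \<eta> y (w + dist x y)" by (rule reg_radius_regular) (use w False in auto)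
      then have "regular_ball R \<eta> x (w + dist x y - dist x y)"
        by (rule regular_ball_shift) (use False in simp)
      then have "regular_ball R \<eta> x w" by simp
      moreover have "w \<le> 1" using w reg_radius_le1[of R \<eta> y] zero_le_dist[of x y] by linarith
      ultimately show ?thesis unfolding reg_radius_def using False
        by (intro cSup_upper[OF _ reg_radius_set(2)]) auto
    qed
  qed
  show ?thesis
  proof (rule lipschitz_onI)
    fix x y
    show "dist (reg_radius R \<eta> x) (reg_radius R \<eta> y) \<le> 1 * dist x y"
      using half[of x y] half[of y x] by (simp add: dist_real_def abs_le_iff dist_commute)
  qed simp
qed

text \<open>On the set of centres of regular \<open>\<rho>\<close>-balls, \<open>R\<close> is \<open>\<eta>\<close>-close to a globally Lipschitz
  function: the inf-convolution of \<open>R\<close> truncated at level \<open>\<pm>1/\<rho>\<close>, with slope \<open>2/\<rho>\<^sup>2\<close>.\<close>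

lemma lipschitz_approx_on_regular_balls:
  fixes R :: "'a::metric_space \<Rightarrow> real"
  assumes \<rho>: "\<rho> > 0" and \<eta>: "\<eta> \<ge> 0"
  shows "\<exists>P. lipschitz P \<and> (\<forall>x. regular_ball R \<eta> x \<rho> \<longrightarrow> \<bar>P x - R x\<bar> \<le> \<eta>)"
proof -
  define N where "N = 1 / \<rho>"
  define M where "M = 2 * N / \<rho>"
  define Q where "Q y = max (- N) (min N (R y))" for y
  have N: "N > 0" "N * \<rho> = 1" using \<rho> by (simp_all add: N_def)
  have M: "M \<ge> 0" "M * \<rho> = 2 * N" using N \<rho> by (simp_all add: M_def)
  have Qb: "- N \<le> Q y" for y by (simp add: Q_def)
  have bdd: "\<exists>c. \<forall>y\<in>UNIV. c \<le> Q y + M * dist x y" for x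
    using Qb M by (metis add_increasing2 mult_nonneg_nonneg zero_le_dist)
  note I = inf_convolution[OF UNIV_not_empty M(1) bdd]
  define P where "P x = (INF y\<in>UNIV. Q y + M * dist x y)" for x
  have close: "\<bar>P x - R x\<bar> \<le> \<eta>" if reg: "regular_ball R \<eta> x \<rho>" for x
  proof -
    have x: "x \<in> ball x \<rho>" using \<rho> by simp
    have "\<rho> * \<bar>R x\<bar> \<le> \<rho> * N" using reg x N(2) unfolding regular_ball_def by (simp add: mult.commute)
    then have RN: "\<bar>R x\<bar> \<le> N" using \<rho> by simp
    then have "Q x = R x" by (auto simp: Q_def abs_le_iff)
    then have up: "P x \<le> R x" using I(2)[of x x] unfolding P_def by simp
    have lo: "R x - \<eta> \<le> P x"
      unfolding P_def
    proof (rule I(3))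
      fix y :: 'a
      show "R x - \<eta> \<le> Q y + M * dist x y"
      proof (cases "dist x y < \<rho>")
        case True
        then have "\<bar>R y - R x\<bar> \<le> \<eta>" using reg x unfolding regular_ball_def by simp
        then have "R x - \<eta> \<le> Q y" using RN \<eta> unfolding Q_def by (auto simp: abs_le_iff)
        moreover have "0 \<le> M * dist x y" using M by simp
        ultimately show ?thesis by linarith
      next
        case False
        then have "M * \<rho> \<le> M * dist x y" using M(1) by (intro mult_left_mono) auto
        then show ?thesis using Qb[of y] RN \<eta> M(2) by (simp add: abs_le_iff)
      qed
    qed
    show ?thesis using up lo \<eta> by (simp add: abs_le_iff)
  qed
  moreover have "lipschitz P" unfolding lipschitz_def P_def[abs_def] using I(1) by blast
  ultimately show ?thesis by blast
qed

definition C1_approximable :: "'a::real_normed_vector itself \<Rightarrow> bool" where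
  "C1_approximable _ \<longleftrightarrow>
     (\<forall>f::'a \<Rightarrow> real. lipschitz f \<longrightarrow> (\<forall>\<epsilon>>0. \<exists>K. C1_smooth K \<and> (\<forall>x. \<bar>f x - K x\<bar> < \<epsilon>)))"

lemma property_star_C1_approximable: "property_star TYPE('a::banach) C0 \<Longrightarrow> C1_approximable TYPE('a)"
  unfolding property_star_def C1_approximable_def by meson

lemma C1_approximableD:
  "C1_approximable TYPE('a::real_normed_vector) \<Longrightarrow> lipschitz (f::'a \<Rightarrow> real) \<Longrightarrow> \<epsilon> > 0 \<Longrightarrow>
     \<exists>K. C1_smooth K \<and> (\<forall>x. \<bar>f x - K x\<bar> < \<epsilon>)"
  unfolding C1_approximable_def by blast

lemma dyadic_scale:
  fixes r :: real
  assumes r_pos: "0 < r" and r_le1: "r \<le> 1"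
  shows "\<exists>k::nat. 1 < 2 * 2^k * r \<and> 2^k * r \<le> 1"
proof -
  obtain n0 :: nat where "1 / r < 2^n0" using real_arch_pow[of 2] by fastforce
  then have ex: "1 < 2 * 2^n0 * r"
    using r_pos by (simp add: divide_less_eq mult.commute)
  define k where "k = (LEAST k::nat. 1 < 2 * 2^k * r)"
  have "1 < 2 * 2^k * r" unfolding k_def by (rule LeastI[where P="\<lambda>k. 1 < 2 * 2^k * r", OF ex])
  moreover have "2^k * r \<le> 1"
  proof (cases k)
    case 0 then show ?thesis using r_le1 by simp
  next
    case (Suc j)
    then have "\<not> 1 < 2 * 2^j * r" using not_less_Least[of j "\<lambda>k. 1 < 2 * 2^k * r"]
      unfolding k_def[symmetric] by simp
    then show ?thesis using Suc by simp
  qed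
  ultimately show ?thesis by blast
qed

lemma smooth_bumps:
  fixes r :: "'a::real_normed_vector \<Rightarrow> real"
  assumes approx: "C1_approximable TYPE('a)"
    and r_pos: "\<And>x. 0 < r x" and r_le1: "\<And>x. r x \<le> 1" and r_lip: "lipschitz_on 1 UNIV r"
  shows "\<exists>w::nat \<Rightarrow> 'a \<Rightarrow> real. (\<forall>n. C1_smooth (w n)) \<and> (\<forall>n x. 0 \<le> w n x)
     \<and> (\<forall>n x. w n x \<noteq> 0 \<longrightarrow> 1 / (8 * 2^n) < r x)
     \<and> (\<forall>x. \<exists>k. 0 < w k x)
     \<and> (\<forall>x. \<exists>m. \<forall>z\<in>ball x (r x / 2). \<forall>n\<ge>m. w n z = 0)"
proof -
  define p where "p n = (2::real)^n" for n :: nat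
  have p0: "p n > 0" for n by (simp add: p_def)
  have "\<exists>S. C1_smooth S \<and> (\<forall>x. \<bar>r x - S x\<bar> < 1 / (16 * p n))" for n
    using C1_approximableD[OF approx, of r "1 / (16 * p n)"] r_lip p0[of n] by (auto simp: lipschitz_def)
  then obtain S where S: "\<And>n. C1_smooth (S n)" "\<And>n x. \<bar>r x - S n x\<bar> < 1/(16 * p n)" by metis
  have Sp: "\<bar>p n * r x - p n * S n x\<bar> < 1/16" for n x
  proof -
    have "p n * \<bar>r x - S n x\<bar> < p n * (1/(16 * p n))" by (rule mult_strict_left_mono[OF S(2) p0])
    then show ?thesis using p0[of n] by (simp add: abs_mult right_diff_distrib[symmetric])
  qed
  define w where "w n x = bump (p n * S n x)" for n x
  have "C1_smooth (w n)" for n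
  proof -
    obtain DS where "C1_on UNIV (S n) DS" using S(1) unfolding C1_smooth_def C1_with_deriv_iff by blast
    from C1_on_compose[OF C1_on_cmult[OF this] bump_deriv bump'_cont]
    show ?thesis unfolding C1_smooth_def C1_with_deriv_iff w_def[abs_def] by blast
  qed
  moreover have "0 \<le> w n x" for n x by (simp add: w_def bump_nonneg)
  moreover have "1 / (8 * p n) < r x" if "w n x \<noteq> 0" for n x
  proof -
    have "1/4 < p n * S n x" using that bump_vanishes unfolding w_def by (metis linorder_not_le)
    then have "3/16 < p n * r x" using Sp[of n x] unfolding abs_less_iff by linarith
    then show ?thesis using p0[of n] by (simp add: field_simps)
  qed
  moreover have "\<exists>k. 0 < w k z" for z
  proof -
    obtain k where k1: "1 < 2 * p k * r z" and k2: "p k * r z \<le> 1"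
      using dyadic_scale[OF r_pos r_le1] unfolding p_def by blast
    have "1/4 < p k * S k z" "p k * S k z < 2" using Sp[of k z] k1 k2 unfolding abs_less_iff by linarith+
    then show ?thesis unfolding w_def by (intro exI bump_pos)
  qed
  moreover have "\<exists>m. \<forall>z\<in>ball x (r x / 2). \<forall>n\<ge>m. w n z = 0" for x
  proof -
    obtain m where m: "33 / (8 * r x) < 2^m" using real_arch_pow[of 2] by fastforce
    show ?thesis
    proof (intro exI ballI allI impI)
      fix z n assume z: "z \<in> ball x (r x / 2)" and n: "m \<le> n"
      have "\<bar>r z - r x\<bar> \<le> dist z x" using lipschitz_onD[OF r_lip, of z x] by (simp add: dist_real_def)
      moreover have "dist z x < r x / 2" using z by (simp add: dist_commute)
      ultimately have rz: "r x / 2 < r z" by linarith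
      have "33 / (8 * r x) < p n" unfolding p_def using m power_increasing[OF n, of "2::real"] by linarith
      then have "33/16 < p n * (r x / 2)" using r_pos[of x] by (simp add: pos_divide_less_eq algebra_simps)
      also have "p n * (r x / 2) < p n * r z" using rz p0[of n] by simp
      finally have "2 \<le> p n * S n z" using Sp[of n z] unfolding abs_less_iff by linarith
      then show "w n z = 0" unfolding w_def by (simp add: bump_vanishes)
    qed
  qed
  ultimately show ?thesis unfolding p_def by blast
qed

lemma suminf_finite_support:
  fixes f :: "nat \<Rightarrow> real"
  assumes "\<And>n. m \<le> n \<Longrightarrow> f n = 0"
  shows "(\<Sum>n. f n) = (\<Sum>n<m. f n)"
  using assms by (intro suminf_finite) auto

lemma sum_pos_finite_support:
  fixes w :: "nat \<Rightarrow> real"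
  assumes "\<And>n. 0 \<le> w n" and "\<And>n. m \<le> n \<Longrightarrow> w n = 0" and "0 < w k"
  shows "0 < (\<Sum>n<m. w n)"
proof -
  have "k < m" using assms(2,3) by (metis less_irrefl not_le)
  then have "w k \<le> (\<Sum>n<m. w n)" using assms(1) by (intro member_le_sum) auto
  then show ?thesis using assms(3) by linarith
qed

lemma weighted_average_close:
  fixes w t :: "nat \<Rightarrow> real"
  assumes w0: "\<And>n. 0 \<le> w n" and fin: "\<And>n. m \<le> n \<Longrightarrow> w n = 0" and pos: "0 < w k"
    and close: "\<And>n. w n \<noteq> 0 \<Longrightarrow> \<bar>t n - c\<bar> \<le> \<eta>"
  shows "\<bar>(\<Sum>n. w n * t n) / (\<Sum>n. w n) - c\<bar> \<le> \<eta>"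
proof -
  define A where "A = (\<Sum>n<m. w n * t n)"
  define B where "B = (\<Sum>n<m. w n)"
  have B: "B > 0" unfolding B_def by (rule sum_pos_finite_support[of w m k, OF w0 fin pos])
  have "(\<Sum>n. w n * t n) = A" unfolding A_def by (rule suminf_finite_support) (simp add: fin)
  moreover have "(\<Sum>n. w n) = B" unfolding B_def by (rule suminf_finite_support) (simp add: fin)
  ultimately have AB: "(\<Sum>n. w n * t n) / (\<Sum>n. w n) = A / B" by simp
  have weighted: "\<bar>w n * (t n - c)\<bar> \<le> w n * \<eta>" for n
    using close[of n] w0[of n] by (cases "w n = 0") (auto simp: abs_mult intro: mult_left_mono)
  have "A - B * c = (\<Sum>n<m. w n * (t n - c))"
    by (simp add: A_def B_def sum_distrib_right sum_subtractf right_diff_distrib)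
  then have "\<bar>A - B * c\<bar> \<le> (\<Sum>n<m. w n * \<eta>)"
    by (metis (no_types, lifting) order_trans sum_abs sum_mono weighted)
  also have "\<dots> = B * \<eta>" by (simp add: B_def sum_distrib_right)
  finally have "\<bar>A - B * c\<bar> \<le> B * \<eta>" .
  moreover have "\<bar>A / B - c\<bar> = \<bar>A - B * c\<bar> / B" using B by (simp add: field_simps abs_divide)
  ultimately show ?thesis using B AB by (simp add: divide_le_eq mult.commute)
qed

text \<open>The normalized average of \<open>C\<^sup>1\<close> functions with locally finite, nonnegative \<open>C\<^sup>1\<close> weights that
  never vanish simultaneously is \<open>C\<^sup>1\<close>: locally it is a quotient of finite sums.\<close>

lemma C1_locally_finite_average:
  fixes w T :: "nat \<Rightarrow> 'a::real_normed_vector \<Rightarrow> real"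
  assumes w: "\<And>n. C1_smooth (w n)" and T: "\<And>n. C1_smooth (T n)"
    and w0: "\<And>n x. 0 \<le> w n x" and pos: "\<And>x. \<exists>k. 0 < w k x"
    and loc: "\<And>x. \<exists>U m. open U \<and> x \<in> U \<and> (\<forall>z\<in>U. \<forall>n\<ge>m. w n z = 0)"
  shows "C1_smooth (\<lambda>x. (\<Sum>n. w n x * T n x) / (\<Sum>n. w n x))"
proof (rule C1_from_local)
  obtain Dw where Dw: "\<And>n. C1_on UNIV (w n) (Dw n)"
    using w unfolding C1_smooth_def C1_with_deriv_iff by metis
  obtain DT where DT: "\<And>n. C1_on UNIV (T n) (DT n)"
    using T unfolding C1_smooth_def C1_with_deriv_iff by metis
  fix x
  from loc[of x] obtain U m where U: "open U" "x \<in> U" and fin: "\<forall>z\<in>U. \<forall>n\<ge>m. w n z = 0"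
    by blast
  have m: "\<And>n. m \<le> n \<Longrightarrow> w n z = 0" if "z \<in> U" for z using fin that by blast
  let ?g = "\<lambda>z. (\<Sum>n<m. w n z * T n z) / (\<Sum>n<m. w n z)"
  have num: "C1_on U (\<lambda>z. \<Sum>n<m. w n z * T n z) (\<lambda>z. \<Sum>n<m. w n z *\<^sub>R DT n z + T n z *\<^sub>R Dw n z)"
    by (rule C1_on_sum, simp, rule C1_on_subset[OF C1_on_mult[OF Dw DT]], simp)
  have den: "C1_on U (\<lambda>z. \<Sum>n<m. w n z) (\<lambda>z. \<Sum>n<m. Dw n z)"
    by (rule C1_on_sum, simp, rule C1_on_subset[OF Dw], simp)
  have nz: "(\<Sum>n<m. w n z) \<noteq> 0" if "z \<in> U" for z
  proof -
    obtain k where "0 < w k z" using pos by blast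
    from sum_pos_finite_support[of "\<lambda>n. w n z" m k, OF w0 m[OF that] this] show ?thesis by simp
  qed
  obtain Dg where Dg: "C1_on U ?g Dg" using C1_on_divide[OF num den nz] by blast
  have eq: "(\<Sum>n. w n z * T n z) / (\<Sum>n. w n z) = ?g z" if "z \<in> U" for z
  proof -
    have "(\<Sum>n. w n z * T n z) = (\<Sum>n<m. w n z * T n z)" "(\<Sum>n. w n z) = (\<Sum>n<m. w n z)"
      by (rule suminf_finite_support, simp add: m[OF that])+
    then show ?thesis by simp
  qed
  show "\<exists>U g Dg. open U \<and> x \<in> U \<and> (\<forall>z\<in>U. (\<Sum>n. w n z * T n z) / (\<Sum>n. w n z) = g z) \<and> C1_on U g Dg"
    by (intro exI[of _ U] exI[of _ ?g] exI[of _ Dg] conjI ballI) (use U eq Dg in auto)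
qed

text \<open>With \<open>r\<close> the regularity radius of \<open>R\<close>
  for oscillation \<open>\<delta>/2\<close>, the weight \<open>w\<^sub>n\<close> lives where \<open>B(x, 2\<^sup>-\<^sup>n/8)\<close> is regular, so there \<open>R\<close> is
  \<open>\<delta>/2\<close>-close to a Lipschitz \<open>P\<^sub>n\<close>, hence \<open>\<delta>\<close>-close to a \<open>C\<^sup>1\<close> function \<open>T\<^sub>n\<close>; average the \<open>T\<^sub>n\<close>.\<close>

theorem C1_uniform_approximation:
  fixes R :: "'a::real_normed_vector \<Rightarrow> real"
  assumes approx: "C1_approximable TYPE('a)" and R: "continuous_on UNIV R" and \<delta>: "\<delta> > 0"
  shows "\<exists>T. C1_smooth T \<and> (\<forall>x. \<bar>R x - T x\<bar> \<le> \<delta>)"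
proof -
  define r where "r = reg_radius R (\<delta>/2)"
  have r_pos: "0 < r x" for x unfolding r_def using reg_radius_pos[OF R] \<delta> by simp
  have r_le1: "r x \<le> 1" for x unfolding r_def by (rule reg_radius_le1)
  have r_lip: "lipschitz_on 1 UNIV r" unfolding r_def by (rule reg_radius_lipschitz)
  obtain w where w: "\<And>n. C1_smooth (w n)" "\<And>n x. 0 \<le> w n x"
      "\<And>n x. w n x \<noteq> 0 \<Longrightarrow> 1 / (8 * 2^n) < r x" "\<And>x. \<exists>k. 0 < w k x"
      and loc: "\<And>x. \<exists>m. \<forall>z\<in>ball x (r x / 2). \<forall>n\<ge>m. w n z = 0"
    using smooth_bumps[OF approx r_pos r_le1 r_lip] by blast
  have "\<exists>T. C1_smooth T \<and> (\<forall>x. regular_ball R (\<delta>/2) x (1 / (8 * 2^n)) \<longrightarrow> \<bar>T x - R x\<bar> < \<delta>)" for n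
  proof -
    obtain P where P: "lipschitz P" "\<And>x. regular_ball R (\<delta>/2) x (1 / (8 * 2^n)) \<Longrightarrow> \<bar>P x - R x\<bar> \<le> \<delta>/2"
      using lipschitz_approx_on_regular_balls[of "1 / (8 * 2^n)" "\<delta>/2" R] \<delta> by auto
    obtain T where T: "C1_smooth T" "\<And>x. \<bar>P x - T x\<bar> < \<delta>/2"
      using C1_approximableD[OF approx P(1), of "\<delta>/2"] \<delta> by auto
    have "\<bar>T x - R x\<bar> < \<delta>" if "regular_ball R (\<delta>/2) x (1 / (8 * 2^n))" for x
      using P(2)[OF that] T(2)[of x] by linarith
    with T(1) show ?thesis by blast
  qed
  then obtain T where T: "\<And>n. C1_smooth (T n)"
    "\<And>n x. regular_ball R (\<delta>/2) x (1 / (8 * 2^n)) \<Longrightarrow> \<bar>T n x - R x\<bar> < \<delta>" by metis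
  have close: "\<bar>T n x - R x\<bar> \<le> \<delta>" if "w n x \<noteq> 0" for n x
  proof -
    have "regular_ball R (\<delta>/2) x (1 / (8 * 2^n))"
      by (rule reg_radius_regular) (use w(3)[OF that] in \<open>auto simp: r_def\<close>)
    then show ?thesis using T(2) by (simp add: less_imp_le)
  qed
  have "C1_smooth (\<lambda>x. (\<Sum>n. w n x * T n x) / (\<Sum>n. w n x))"
  proof (rule C1_locally_finite_average[OF w(1) T(1) w(2) w(4)])
    show "\<exists>U m. open U \<and> x \<in> U \<and> (\<forall>z\<in>U. \<forall>n\<ge>m. w n z = 0)" for x
      using loc[of x] r_pos[of x] by (intro exI[of _ "ball x (r x / 2)"]) auto
  qed
  moreover have "\<bar>R x - (\<Sum>n. w n x * T n x) / (\<Sum>n. w n x)\<bar> \<le> \<delta>" for x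
  proof -
    obtain m where "\<forall>n\<ge>m. w n x = 0" using loc[of x] r_pos[of x] by fastforce
    moreover obtain k where "0 < w k x" using w(4) by blast
    ultimately show ?thesis
      using weighted_average_close[of "\<lambda>n. w n x" m k "\<lambda>n. T n x" "R x" \<delta>] w(2) close
      by (simp add: abs_minus_commute)
  qed
  ultimately show ?thesis by blast
qed

lemma smooth_switch:
  fixes S K :: "'a::real_normed_vector \<Rightarrow> real"
  assumes S: "C1_on UNIV S DS" and K: "C1_on UNIV K DK" and a: "a > 0"
  defines "G \<equiv> \<lambda>x. K x + dead_zone a (S x - K x)"
    and "D \<equiv> \<lambda>x. DK x + dead_zone' a (S x - K x) *\<^sub>R (DS x - DK x)"
  shows "C1_with_deriv G D"
    and "\<And>x. \<bar>G x - S x\<bar> \<le> 4 * a"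
    and "\<And>x. \<bar>S x - K x\<bar> \<le> a \<Longrightarrow> G x = K x \<and> D x = DK x"
    and "\<And>LS LK. lipschitz_on LS UNIV S \<Longrightarrow> lipschitz_on LK UNIV K \<Longrightarrow> lipschitz_on (2 * LK + LS) UNIV G"
proof -
  show "C1_with_deriv G D"
    unfolding C1_with_deriv_iff G_def D_def
    by (rule C1_on_add[OF K C1_on_compose[OF C1_on_diff[OF S K] dead_zone_deriv[OF a] dead_zone'_cont]])
  show "\<bar>G x - S x\<bar> \<le> 4 * a" for x
    using dead_zone_close[OF a, of "S x - K x"] by (simp add: G_def)
  show "G x = K x \<and> D x = DK x" if "\<bar>S x - K x\<bar> \<le> a" for x
    using dead_zone_vanishes[OF a that] dead_zone'_vanishes[OF a that] by (simp add: G_def D_def)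
  fix LS LK assume LS: "lipschitz_on LS UNIV S" and LK: "lipschitz_on LK UNIV K"
  have "lipschitz_on (1 * (LS + LK)) UNIV (\<lambda>x. dead_zone a (S x - K x))"
    by (rule lipschitz_on_compose2[OF lipschitz_on_diff[OF LS LK]
          lipschitz_on_subset[OF dead_zone_lipschitz[OF a]]]) simp
  from lipschitz_on_add[OF LK this] show "lipschitz_on (2 * LK + LS) UNIV G"
    unfolding G_def by (simp add: algebra_simps)
qed

lemma smooth_lipschitz_approx_on_subset:
  fixes F :: "'a::banach \<Rightarrow> real"
  assumes star: "property_star TYPE('a) C0" and YF: "lipschitz_on L Y F" and eps: "\<epsilon> > 0"
  shows "\<exists>K DK. C1_on UNIV K DK \<and> lipschitz_on (C0 * Lip Y F) UNIV K \<and> (\<forall>y\<in>Y. \<bar>F y - K y\<bar> < \<epsilon>)"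
proof -
  obtain H where H: "lipschitz_on (Lip Y F) UNIV H" "\<forall>y\<in>Y. H y = F y"
    using mcshane_extension[OF YF] by blast
  have "lipschitz H" using H(1) by (auto simp: lipschitz_def)
  then obtain K where K: "lipschitz K" "C1_smooth K" "\<forall>x. \<bar>H x - K x\<bar> < \<epsilon>" "Lip UNIV K \<le> C0 * Lip UNIV H"
    using star eps unfolding property_star_def by blast
  obtain DK where DK: "C1_on UNIV K DK" using K(2) unfolding C1_smooth_def C1_with_deriv_iff by blast
  have "lipschitz_on (Lip UNIV K) UNIV K" using K(1) Lip_attained unfolding lipschitz_def by blast
  moreover have "Lip UNIV H = Lip Y F"
  proof (rule antisym)
    show "Lip UNIV H \<le> Lip Y F" by (rule Lip_le[OF H(1)])
    have "Lip Y F = Lip Y H" using H(2) by (intro Lip_cong) simp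
    also have "\<dots> \<le> Lip UNIV H" by (rule Lip_mono[OF H(1)]) simp
    finally show "Lip Y F \<le> Lip UNIV H" .
  qed
  then have "Lip UNIV K \<le> C0 * Lip Y F" using K(4) by simp
  ultimately have "lipschitz_on (C0 * Lip Y F) UNIV K" by (rule lipschitz_on_le)
  moreover have "\<bar>F y - K y\<bar> < \<epsilon>" if "y \<in> Y" for y using K(3)[rule_format, of y] H(2) that by simp
  ultimately show ?thesis using DK by blast
qed

lemma controlled_approximation:
  fixes F S :: "'a::banach \<Rightarrow> real"
  assumes star: "property_star TYPE('a) C0" and YF: "lipschitz_on L Y F" and eps: "\<epsilon> > 0"
    and S: "C1_on UNIV S DS" and FS: "\<And>x. \<bar>F x - S x\<bar> \<le> \<epsilon>/16"
  shows "\<exists>G D. C1_with_deriv G D \<and> (\<forall>x. \<bar>F x - G x\<bar> \<le> \<epsilon>) \<and> Lip Y G \<le> C0 * Lip Y F \<and>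
     (\<forall>y\<in>Y. norm (D y) \<le> C0 * Lip Y F) \<and>
     (\<forall>LS. lipschitz_on LS UNIV S \<longrightarrow> lipschitz_on (2 * (C0 * Lip Y F) + LS) UNIV G)"
proof -
  obtain K DK where K: "C1_on UNIV K DK" and LK: "lipschitz_on (C0 * Lip Y F) UNIV K"
    and FK: "\<forall>y\<in>Y. \<bar>F y - K y\<bar> < \<epsilon>/16"
    using smooth_lipschitz_approx_on_subset[OF star YF, of "\<epsilon>/16"] eps by auto
  define a where "a = \<epsilon>/8"
  have a: "a > 0" using eps by (simp add: a_def)
  note switch = smooth_switch[OF S K a]
  define G where "G x = K x + dead_zone a (S x - K x)" for x
  define D where "D x = DK x + dead_zone' a (S x - K x) *\<^sub>R (DS x - DK x)" for x
  have onY: "G y = K y \<and> D y = DK y" if "y \<in> Y" for y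
  proof -
    have "\<bar>F y - K y\<bar> < \<epsilon>/16" using FK that by blast
    then have "\<bar>S y - K y\<bar> \<le> a" using FS[of y] unfolding a_def abs_le_iff abs_less_iff by linarith
    then show ?thesis using switch(3) unfolding G_def D_def by blast
  qed
  have "\<bar>F x - G x\<bar> \<le> \<epsilon>" for x using FS[of x] switch(2)[of x] unfolding G_def a_def by linarith
  moreover have "Lip Y G \<le> C0 * Lip Y F"
    using Lip_cong[of Y G K] onY Lip_le[OF lipschitz_on_subset[OF LK]] by simp
  moreover have "norm (D y) \<le> C0 * Lip Y F" if "y \<in> Y" for y
  proof -
    have "(K has_derivative blinfun_apply (DK y)) (at y)" using K unfolding C1_on_def by blast
    then have "norm (DK y) \<le> C0 * Lip Y F" by (rule norm_derivative_le_lipschitz[OF LK])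
    then show ?thesis using onY[OF that] by simp
  qed
  moreover have "lipschitz_on (2 * (C0 * Lip Y F) + LS) UNIV G" if "lipschitz_on LS UNIV S" for LS
    using switch(4)[OF that LK] unfolding G_def .
  ultimately show ?thesis using switch(1) unfolding G_def[symmetric] D_def[symmetric] by blast
qed

lemma approximation_lipschitz_on_subset:
  fixes F :: "'a::banach \<Rightarrow> real"
  assumes star: "property_star TYPE('a) C0" and F: "continuous_on UNIV F"
    and YF: "lipschitz_on L Y F" and eps: "\<epsilon> > 0"
  shows "\<exists>G D. C1_with_deriv G D \<and> (\<forall>x. \<bar>F x - G x\<bar> \<le> \<epsilon>) \<and> Lip Y G \<le> C0 * Lip Y F \<and>
     (\<forall>y\<in>Y. norm (D y) \<le> C0 * Lip Y F)"
proof -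
  obtain S where "C1_smooth S" "\<forall>x. \<bar>F x - S x\<bar> \<le> \<epsilon>/16"
    using C1_uniform_approximation[OF property_star_C1_approximable[OF star] F, of "\<epsilon>/16"] eps by auto
  then obtain DS where "C1_on UNIV S DS" "\<And>x. \<bar>F x - S x\<bar> \<le> \<epsilon>/16"
    unfolding C1_smooth_def C1_with_deriv_iff by blast
  from controlled_approximation[OF star YF eps this] show ?thesis by blast
qed

lemma approximation_lipschitz:
  fixes F :: "'a::banach \<Rightarrow> real"
  assumes star: "property_star TYPE('a) C0" and F: "lipschitz F" and eps: "\<epsilon> > 0"
  shows "\<exists>G D. C1_with_deriv G D \<and> (\<forall>x. \<bar>F x - G x\<bar> \<le> \<epsilon>) \<and> Lip Y G \<le> C0 * Lip Y F \<and>
     (\<forall>y\<in>Y. norm (D y) \<le> C0 * Lip Y F) \<and> lipschitz G \<and> Lip UNIV G \<le> 3 * \<bar>C0\<bar> * Lip UNIV F"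
proof -
  obtain L where LF: "lipschitz_on L UNIV F" using F unfolding lipschitz_def by blast
  have YF: "lipschitz_on L Y F" using lipschitz_on_subset[OF LF] by blast
  obtain S where S: "lipschitz S" "C1_smooth S" "\<forall>x. \<bar>F x - S x\<bar> < \<epsilon>/16" "Lip UNIV S \<le> C0 * Lip UNIV F"
    using star F eps unfolding property_star_def by (meson zero_less_divide_iff zero_less_numeral)
  obtain DS where DS: "C1_on UNIV S DS" using S(2) unfolding C1_smooth_def C1_with_deriv_iff by blast
  have LS: "lipschitz_on (Lip UNIV S) UNIV S" using S(1) Lip_attained unfolding lipschitz_def by blast
  obtain G D where GD: "C1_with_deriv G D" "\<forall>x. \<bar>F x - G x\<bar> \<le> \<epsilon>" "Lip Y G \<le> C0 * Lip Y F"
      "\<forall>y\<in>Y. norm (D y) \<le> C0 * Lip Y F" and LG: "lipschitz_on (2 * (C0 * Lip Y F) + Lip UNIV S) UNIV G"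
    using controlled_approximation[OF star YF eps DS] S(3) LS by (meson less_imp_le)
  have "C0 * Lip Y F \<le> \<bar>C0\<bar> * Lip UNIV F"
    using Lip_mono[OF LF, of Y] Lip_nonneg[OF YF] by (metis abs_ge_self abs_ge_zero mult_mono order_trans subset_UNIV)
  moreover have "C0 * Lip UNIV F \<le> \<bar>C0\<bar> * Lip UNIV F"
    using Lip_nonneg[OF LF] by (simp add: mult_right_mono)
  ultimately have "Lip UNIV G \<le> 3 * \<bar>C0\<bar> * Lip UNIV F" using Lip_le[OF LG] S(4) by linarith
  with GD LG show ?thesis unfolding lipschitz_def by blast
qed

theorem lemma2p3:
  fixes C0 :: real
  assumes "property_star TYPE('a::banach) C0"
  shows "(\<forall>(Y::'a set) (F::'a \<Rightarrow> real) \<epsilon>.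
            continuous_on UNIV F \<and> (\<exists>L. lipschitz_on L Y F) \<and> \<epsilon> > 0 \<longrightarrow>
            (\<exists>G D. C1_with_deriv G D \<and>
               (\<forall>x. \<bar>F x - G x\<bar> \<le> \<epsilon>) \<and>
               Lip Y G \<le> C0 * Lip Y F \<and>
               (\<forall>y\<in>Y. norm (D y) \<le> C0 * Lip Y F)))
       \<and> (\<exists>C1\<ge>C0. \<forall>(Y::'a set) (F::'a \<Rightarrow> real) \<epsilon>.
            lipschitz F \<and> \<epsilon> > 0 \<longrightarrow>
            (\<exists>G D. C1_with_deriv G D \<and>
               (\<forall>x. \<bar>F x - G x\<bar> \<le> \<epsilon>) \<and>
               Lip Y G \<le> C0 * Lip Y F \<and>
               (\<forall>y\<in>Y. norm (D y) \<le> C0 * Lip Y F) \<and>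
               lipschitz G \<and> Lip UNIV G \<le> C1 * Lip UNIV F))"
proof (intro conjI allI impI)
  fix Y :: "'a set" and F :: "'a \<Rightarrow> real" and \<epsilon> :: real
  assume "continuous_on UNIV F \<and> (\<exists>L. lipschitz_on L Y F) \<and> \<epsilon> > 0"
  then show "\<exists>G D. C1_with_deriv G D \<and> (\<forall>x. \<bar>F x - G x\<bar> \<le> \<epsilon>) \<and> Lip Y G \<le> C0 * Lip Y F \<and>
      (\<forall>y\<in>Y. norm (D y) \<le> C0 * Lip Y F)"
    using approximation_lipschitz_on_subset[OF assms] by blast
next
  have "C0 \<le> 3 * \<bar>C0\<bar>" by simp
  moreover note approximation_lipschitz[OF assms]
  ultimately show "\<exists>C1\<ge>C0. \<forall>(Y::'a set) (F::'a \<Rightarrow> real) \<epsilon>. lipschitz F \<and> \<epsilon> > 0 \<longrightarrow>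
      (\<exists>G D. C1_with_deriv G D \<and> (\<forall>x. \<bar>F x - G x\<bar> \<le> \<epsilon>) \<and> Lip Y G \<le> C0 * Lip Y F \<and>
        (\<forall>y\<in>Y. norm (D y) \<le> C0 * Lip Y F) \<and> lipschitz G \<and> Lip UNIV G \<le> C1 * Lip UNIV F)"
    by blast
qed

end
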